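(* Let $\varrho=(\varrho_m)_{1\le m\le n-1}$ and $\sigma=(\sigma_m)_{1\le m\le n-1}$ be two independent uniformly random permutations of $\{1,\dots,n-1\}$. Then $(U_1,\dots,U_{n-1})$ is equal in distribution to the process \[ \Bigl(\#\{1\le m\le n-1:\varrho_m<k<\sigma_m\}+1\Bigr)_{1\le k\le n-1}. \]
   Context: Urn process: let $n\ge2$. An urn initially contains $n$ black balls. It is emptied in $n$ steps: in each of the first $n-1$ steps a uniformly random pair of balls is removed from the urn and replaced by one red ball; in step $n$ the last remaining ball is removed. $U_k$ is the number of red balls in the urn after $k$ steps, $0\le k\le n$. *)

theory Defs
  imports "HOL-Probability.Probability" "HOL-Combinatorics.Permutations"
begin

datatype colour = Black | Red

text \<open>An urn is a list of coloured balls; the balls are the positions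
 0,...,length-1 (distinguishable). One step: remove a uniformly random
 2-element set of balls and add one red ball.\<close>
definition urn_step :: "colour list \<Rightarrow> colour list pmf" where
  "urn_step u = map_pmf
     (\<lambda>S. [u ! i. i \<leftarrow> [0..<length u], i \<notin> S] @ [Red])
     (pmf_of_set {S. S \<subseteq> {..<length u} \<and> card S = 2})"

fun urn_traj :: "nat \<Rightarrow> colour list \<Rightarrow> colour list list pmf" where
  "urn_traj 0 u = return_pmf []"
| "urn_traj (Suc k) u =
     bind_pmf (urn_step u) (\<lambda>u'. map_pmf (\<lambda>rest. u' # rest) (urn_traj k u'))"

text \<open>Law of (U_1,...,U_{n-1}), U_k = number of red balls after k steps,
 starting from n black balls.\<close>
definition U_process :: "nat \<Rightarrow> nat list pmf" where
  "U_process n = map_pmf (map (\<lambda>u. count_list u Red))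
     (urn_traj (n - 1) (replicate n Black))"

definition unif_perm :: "nat \<Rightarrow> (nat \<Rightarrow> nat) pmf" where
  "unif_perm n = pmf_of_set {f. f permutes {1..n-1}}"

definition perm_process :: "nat \<Rightarrow> nat list pmf" where
  "perm_process n = map_pmf
     (\<lambda>(\<rho>, \<sigma>). map (\<lambda>k. card {m \<in> {1..n-1}. \<rho> m < k \<and> k < \<sigma> m} + 1) [1..<n])
     (pair_pmf (unif_perm n) (unif_perm n))"

end

theory Submission
  imports Defs
begin

(*
  Both processes are shown to be the same time-inhomogeneous Markov chain.

  Urn side: if the urn holds t balls, r of them red, one step leaves
  r + 1 - |S \<inter> R| red balls, where S is the uniformly chosen pair and R the
  set of red balls.  The law of this number depends only on t and r; it is
  the kernel red_step t r, and red_chain t r is the law of the successive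
  red counts until a single ball is left.  Hence U_process n = red_chain n 0.

  Permutation side: a permutation \<rho> of {1..n-1} is encoded by its inverse
  listing [\<rho>\<inverse>(1), ..., \<rho>\<inverse>(n-1)], a uniformly random arrangement of {1..n-1}.
  For arrangements P of X and Q of Y with |X| = |Y| + 1 the gap counts
  |set (suffix of Q) - set (suffix of P)| + 1 again form a red chain: removing
  the first entries x, y (independent and uniform) turns d = |Y - X| into
  |(Y - {y}) - (X - {x})|, whose law is red_step |X| (d + 1) by a counting
  argument on X \<times> Y.  The statistic #{m. \<rho> m < k < \<sigma> m} is such a gap count
  for P the listing of \<rho> and Q the tail of the listing of \<sigma>.
*)

text \<open>A pmf is determined by its values off a single point, since the
  missing mass is forced.  This lets us compare kernels without computing
  the probability that the red count stays put.\<close>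
lemma pmf_eq_off_point:
  fixes p q :: "'a pmf"
  assumes "\<And>i. i \<noteq> i0 \<Longrightarrow> pmf p i = pmf q i"
  shows "p = q"
proof (rule pmf_eqI)
  fix i
  have compl: "measure p (-{i0}) = measure q (-{i0})"
    unfolding measure_pmf_conv_infsetsum by (rule infsetsum_cong) (use assms in auto)
  have "pmf p i0 = 1 - measure p (-{i0})"
    using measure_pmf.prob_compl[of "{i0}" p] by (simp add: measure_pmf_single Compl_eq_Diff_UNIV)
  also have "\<dots> = 1 - measure q (-{i0})" using compl by simp
  also have "\<dots> = pmf q i0"
    using measure_pmf.prob_compl[of "{i0}" q] by (simp add: measure_pmf_single Compl_eq_Diff_UNIV)
  finally show "pmf p i = pmf q i" using assms by (cases "i = i0") auto
qed

lemma pair_pmf_of_set: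
  assumes "finite X" "finite Y" "X \<noteq> {}" "Y \<noteq> {}"
  shows "pair_pmf (pmf_of_set X) (pmf_of_set Y) = pmf_of_set (X \<times> Y)"
proof (rule pmf_eqI)
  fix z :: "'a \<times> 'b"
  show "pmf (pair_pmf (pmf_of_set X) (pmf_of_set Y)) z = pmf (pmf_of_set (X \<times> Y)) z"
    using assms by (cases z) (simp add: pmf_pair card_cartesian_product indicator_def)
qed

lemma pair_pmf_bind_right: "pair_pmf A (bind_pmf B f) = bind_pmf B (\<lambda>b. pair_pmf A (f b))"
  unfolding pair_pmf_def bind_assoc_pmf by (rule bind_commute_pmf)

lemma pmf_map_pmf_of_set:
  assumes "finite A" "A \<noteq> {}"
  shows "pmf (map_pmf f (pmf_of_set A)) i = card {a \<in> A. f a = i} / card A"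
  using assms by (simp add: pmf_map measure_pmf_of_set vimage_def Int_def conj_commute)

section \<open>The one-step kernel of the red count\<close>

definition two_subsets :: "nat \<Rightarrow> nat set set" where
  "two_subsets t = {S. S \<subseteq> {..<t} \<and> card S = 2}"

lemma card_two_subsets: "card (two_subsets t) = t choose 2"
  unfolding two_subsets_def using n_subsets[of "{..<t}" 2] by simp

lemma finite_two_subsets: "finite (two_subsets t)"
  unfolding two_subsets_def by (rule finite_subset[of _ "Pow {..<t}"]) auto

lemma two_subsets_nonempty: "2 \<le> t \<Longrightarrow> two_subsets t \<noteq> {}"
  using card_two_subsets[of t] by (metis card.empty binomial_eq_0_iff not_less)

lemma real_choose_two: "real (a choose 2) = real (a * (a - 1)) / 2"
proof -
  have "even (a * (a - 1))" by (cases a) auto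
  then have "2 * (a choose 2) = a * (a - 1)" by (simp add: choose_two)
  then have "real (2 * (a choose 2)) = real (a * (a - 1))" by (simp only:)
  then show ?thesis by simp
qed

text \<open>Transition probabilities of the red count in an urn of t balls with r
  red ones, away from the diagonal: up by one if the pair is black, down by
  one if the pair is red.\<close>
definition red_step_prob :: "nat \<Rightarrow> nat \<Rightarrow> nat \<Rightarrow> real" where
  "red_step_prob t r i =
     (if i = r + 1 then real ((t - r) * (t - r - 1)) / real (t * (t - 1))
      else if i + 1 = r then real (r * (r - 1)) / real (t * (t - 1)) else 0)"

lemma red_count_after_pair_prob:
  assumes t: "2 \<le> t" and R: "R \<subseteq> {..<t}" "card R = r" and i: "i \<noteq> r"
  shows "pmf (map_pmf (\<lambda>S. r + 1 - card (S \<inter> R)) (pmf_of_set (two_subsets t))) i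
         = red_step_prob t r i"
proof -
  let ?pre = "{S \<in> two_subsets t. r + 1 - card (S \<inter> R) = i}"
  have fR: "finite R" using R finite_subset by blast
  have fS: "finite S" "card S = 2" if "S \<in> two_subsets t" for S
    using that finite_subset unfolding two_subsets_def by auto
  have meet_le: "card (S \<inter> R) \<le> r" "card (S \<inter> R) \<le> card S" if "S \<in> two_subsets t" for S
    using R(2) fR fS[OF that] by (metis Int_lower2 card_mono) (metis Int_lower1 card_mono fS(1)[OF that])
  have prob: "pmf (map_pmf (\<lambda>S. r + 1 - card (S \<inter> R)) (pmf_of_set (two_subsets t))) i
      = card ?pre / (t choose 2)"
    using t by (simp add: pmf_map_pmf_of_set finite_two_subsets two_subsets_nonempty card_two_subsets)
  consider "i = r + 1" | "i + 1 = r" | "i \<noteq> r + 1" "i + 1 \<noteq> r" by blast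
  then show ?thesis
  proof cases
    case 1
    have "?pre = {S. S \<subseteq> {..<t} - R \<and> card S = 2}"
    proof -
      have "r + 1 - card (S \<inter> R) = i \<longleftrightarrow> S \<inter> R = {}" if "S \<in> two_subsets t" for S
      proof -
        have "r + 1 - card (S \<inter> R) = i \<longleftrightarrow> card (S \<inter> R) = 0" using 1 meet_le[OF that] by auto
        then show ?thesis using fS[OF that] by simp
      qed
      then show ?thesis unfolding two_subsets_def by blast
    qed
    also have "card \<dots> = (t - r) choose 2"
      using n_subsets[of "{..<t} - R" 2] R fR by (simp add: card_Diff_subset)
    finally show ?thesis using 1 prob by (simp add: red_step_prob_def real_choose_two)
  next
    case 2
    have "?pre = {S. S \<subseteq> R \<and> card S = 2}"
    proof -
      have "r + 1 - card (S \<inter> R) = i \<longleftrightarrow> S \<inter> R = S" if "S \<in> two_subsets t" for S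
      proof -
        have "r + 1 - card (S \<inter> R) = i \<longleftrightarrow> card (S \<inter> R) = card S"
          using 2 meet_le[OF that] fS[OF that] by auto
        then show ?thesis using fS[OF that] by (metis Int_lower1 card_subset_eq)
      qed
      then show ?thesis using R unfolding two_subsets_def by blast
    qed
    also have "card \<dots> = r choose 2" using n_subsets[of R 2] R fR by simp
    finally show ?thesis using 2 prob by (simp add: red_step_prob_def real_choose_two)
  next
    case 3
    have "?pre = {}" using 3 i meet_le fS by fastforce
    then show ?thesis using 3 prob by (simp only: card.empty) (simp add: red_step_prob_def)
  qed
qed

text \<open>The kernel, realised with the red balls being the first r positions.\<close>
definition red_step :: "nat \<Rightarrow> nat \<Rightarrow> nat pmf" where
  "red_step t r = map_pmf (\<lambda>S. r + 1 - card (S \<inter> {..<r})) (pmf_of_set (two_subsets t))"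

lemma red_step_unique:
  assumes "2 \<le> t" "r \<le> t" "\<And>i. i \<noteq> r \<Longrightarrow> pmf p i = red_step_prob t r i"
  shows "red_step t r = p"
  unfolding red_step_def
  by (rule pmf_eq_off_point[of r]) (use assms red_count_after_pair_prob[of t "{..<r}" r] in auto)

lemma red_step_from_zero: "2 \<le> t \<Longrightarrow> red_step t 0 = return_pmf 1"
  by (rule red_step_unique) (auto simp: red_step_prob_def indicator_def)

fun red_chain :: "nat \<Rightarrow> nat \<Rightarrow> nat list pmf" where
  "red_chain (Suc (Suc t)) r =
     bind_pmf (red_step (Suc (Suc t)) r) (\<lambda>r'. map_pmf (Cons r') (red_chain (Suc t) r'))"
| "red_chain _ r = return_pmf []"

lemma red_chain_from_zero:
  assumes "2 \<le> t"
  shows "red_chain t 0 = map_pmf (Cons 1) (red_chain (t - 1) 1)"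
proof -
  obtain t' where t: "t = Suc (Suc t')" using assms by (metis add_2_eq_Suc le_Suc_ex)
  show ?thesis using red_step_from_zero[OF assms] unfolding t by (simp add: bind_return_pmf)
qed

section \<open>The urn process is a red chain\<close>

abbreviation reds :: "colour list \<Rightarrow> nat" where "reds u \<equiv> count_list u Red"

lemma count_list_map_filter_upt:
  "count_list (map f (filter P [0..<t])) a = card {i. i < t \<and> P i \<and> f i = a}"
proof (induct t)
  case 0 then show ?case by simp
next
  case (Suc t)
  have "{i. i < Suc t \<and> P i \<and> f i = a} =
     {i. i < t \<and> P i \<and> f i = a} \<union> (if P t \<and> f t = a then {t} else {})"
    by (auto simp: less_Suc_eq)
  then show ?case using Suc by (simp add: card_insert_if)
qed

lemma remaining_balls_eq: "[u ! i. i \<leftarrow> [0..<t], i \<notin> S] = map ((!) u) (filter (\<lambda>i. i \<notin> S) [0..<t])"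
  by (induct t) auto

lemma reds_eq_card: "reds u = card {i. i < length u \<and> u ! i = Red}"
  using count_list_map_filter_upt[of "(!) u" "\<lambda>i. True" "length u" Red] by (simp add: map_nth)

lemma length_urn_step:
  assumes "2 \<le> length u" "u' \<in> set_pmf (urn_step u)"
  shows "length u' = length u - 1"
proof -
  obtain S where S: "S \<subseteq> {..<length u}" "card S = 2"
    and u': "u' = [u ! i. i \<leftarrow> [0..<length u], i \<notin> S] @ [Red]"
    using assms two_subsets_nonempty finite_two_subsets
    unfolding urn_step_def two_subsets_def by auto
  have "length (filter (\<lambda>i. i \<notin> S) [0..<length u]) = card ({..<length u} - S)"
    by (simp add: length_filter_conv_card) (rule arg_cong[where f=card], auto)
  also have "\<dots> = length u - 2" using S by (simp add: card_Diff_subset finite_subset)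
  finally show ?thesis using u' assms(1) by (simp only: remaining_balls_eq length_append length_map) simp
qed

lemma reds_urn_step:
  assumes "length u = t" "2 \<le> t"
  shows "map_pmf reds (urn_step u) = red_step t (reds u)"
proof -
  define R where "R = {i. i < t \<and> u ! i = Red}"
  have cR: "card R = reds u" using assms by (simp add: R_def reds_eq_card)
  have R: "R \<subseteq> {..<t}" by (auto simp: R_def)
  have fR: "finite R" using R finite_subset by blast
  have "map_pmf reds (urn_step u)
      = map_pmf (\<lambda>S. reds u + 1 - card (S \<inter> R)) (pmf_of_set (two_subsets t))"
    unfolding urn_step_def pmf.map_comp two_subsets_def[symmetric] assms(1)
  proof (rule map_pmf_cong[OF refl])
    fix S
    have "(reds \<circ> (\<lambda>S. [u ! i. i \<leftarrow> [0..<t], i \<notin> S] @ [Red])) S = card (R - S) + 1"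
      by (simp add: remaining_balls_eq count_list_map_filter_upt R_def) (rule arg_cong[where f=card], auto)
    also have "card (R - S) = card R - card (S \<inter> R)"
      using fR by (metis card_Diff_subset_Int Int_commute finite_Int)
    finally show "(reds \<circ> (\<lambda>S. [u ! i. i \<leftarrow> [0..<t], i \<notin> S] @ [Red])) S = reds u + 1 - card (S \<inter> R)"
      using cR fR by (metis Int_lower2 Nat.add_diff_assoc2 card_mono)
  qed
  also have "\<dots> = red_step t (reds u)"
    by (rule red_step_unique[symmetric])
      (use assms R cR red_count_after_pair_prob[of t R "reds u"] count_le_length[of u Red] in auto)
  finally show ?thesis .
qed

lemma reds_urn_traj: "length u = Suc k \<Longrightarrow> map_pmf (map reds) (urn_traj k u) = red_chain (Suc k) (reds u)"
proof (induct k arbitrary: u)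
  case 0 then show ?case by simp
next
  case (Suc k)
  have "map_pmf (map reds) (urn_traj (Suc k) u)
      = bind_pmf (urn_step u) (\<lambda>u'. map_pmf (Cons (reds u')) (map_pmf (map reds) (urn_traj k u')))"
    by (simp only: urn_traj.simps map_bind_pmf pmf.map_comp o_def list.map)
  also have "\<dots> = bind_pmf (urn_step u) (\<lambda>u'. map_pmf (Cons (reds u')) (red_chain (Suc k) (reds u')))"
  proof (rule bind_pmf_cong[OF refl])
    fix u' assume "u' \<in> set_pmf (urn_step u)"
    then have "length u' = Suc k" using length_urn_step[of u u'] Suc.prems by simp
    then show "map_pmf (Cons (reds u')) (map_pmf (map reds) (urn_traj k u'))
             = map_pmf (Cons (reds u')) (red_chain (Suc k) (reds u'))"
      using Suc.hyps by simp
  qed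
  also have "\<dots> = bind_pmf (map_pmf reds (urn_step u)) (\<lambda>r'. map_pmf (Cons r') (red_chain (Suc k) r'))"
    by (simp only: bind_map_pmf)
  also have "map_pmf reds (urn_step u) = red_step (Suc (Suc k)) (reds u)"
    using reds_urn_step[of u "Suc (Suc k)"] Suc.prems by simp
  finally show ?case by (simp only: red_chain.simps(1))
qed

lemma U_process_red_chain: "1 \<le> n \<Longrightarrow> U_process n = red_chain n 0"
  unfolding U_process_def using reds_urn_traj[of "replicate n Black" "n - 1"] by simp

section \<open>Pairs of random arrangements form a red chain\<close>

abbreviation random_arrangement :: "'a set \<Rightarrow> 'a list pmf" where
  "random_arrangement X \<equiv> pmf_of_set (permutations_of_set X)"

lemma set_random_arrangement:
  "finite X \<Longrightarrow> set_pmf (random_arrangement X) = permutations_of_set X"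
  by (simp add: set_pmf_of_set)

lemma gap_after_removal:
  assumes "x \<in> X" "y \<in> Y" "finite Y"
  shows "card ((Y - {y}) - (X - {x})) + 1 =
           (if y \<in> X \<and> x \<in> Y \<and> x \<noteq> y then card (Y - X) + 2
            else if y \<notin> X \<and> x \<notin> Y then card (Y - X) else card (Y - X) + 1)"
proof -
  have removed: "(Y - {y}) - (X - {x}) = (Y - X - {y}) \<union> (if x \<in> Y \<and> x \<noteq> y then {x} else {})"
    using assms by auto
  have "card (Y - X - {y}) = card (Y - X) - (if y \<notin> X then 1 else 0)"
    using assms by auto
  moreover have "y \<notin> X \<Longrightarrow> card (Y - X) \<ge> 1"
    using assms by (metis DiffI One_nat_def card_gt_0_iff empty_iff finite_Diff less_eq_Suc_le)
  ultimately show ?thesis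
    unfolding removed using assms by (auto simp: card_insert_if)
qed

lemma card_offdiagonal:
  assumes "finite A"
  shows "card (A \<times> A - (\<lambda>a. (a, a)) ` A) = card A * card A - card A"
  using assms by (subst card_Diff_subset) (auto simp: card_image inj_on_def card_cartesian_product)

lemma gap_after_removal_level_sets:
  fixes X Y :: "'a set"
  defines "g \<equiv> \<lambda>(x, y). card ((Y - {y}) - (X - {x})) + 1"
  assumes "finite Y"
  shows "{z \<in> X \<times> Y. g z = card (Y - X) + 2} = (X \<inter> Y) \<times> (X \<inter> Y) - (\<lambda>a. (a, a)) ` (X \<inter> Y)"
    and "{z \<in> X \<times> Y. g z = card (Y - X)} = (X - Y) \<times> (Y - X)"
    and "i \<notin> {card (Y - X), card (Y - X) + 1, card (Y - X) + 2} \<Longrightarrow> {z \<in> X \<times> Y. g z = i} = {}"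
proof -
  let ?d = "card (Y - X)"
  have level: "z \<in> {z \<in> X \<times> Y. g z = i} \<longleftrightarrow> z \<in> {(x, y). x \<in> X \<and> y \<in> Y \<and>
      i = (if y \<in> X \<and> x \<in> Y \<and> x \<noteq> y then ?d + 2 else if y \<notin> X \<and> x \<notin> Y then ?d else ?d + 1)}" for z i
    using assms gap_after_removal[of "fst z" X "snd z" Y] by (cases z) auto
  show "{z \<in> X \<times> Y. g z = ?d + 2} = (X \<inter> Y) \<times> (X \<inter> Y) - (\<lambda>a. (a, a)) ` (X \<inter> Y)"
    by (rule set_eqI, unfold level) auto
  show "{z \<in> X \<times> Y. g z = ?d} = (X - Y) \<times> (Y - X)"
    by (rule set_eqI, unfold level) auto
  show "i \<notin> {?d, ?d + 1, ?d + 2} \<Longrightarrow> {z \<in> X \<times> Y. g z = i} = {}"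
    by (rule set_eqI, unfold level) auto
qed

lemma gap_step_red_step:
  fixes X Y :: "'a set"
  assumes fX: "finite X" and fY: "finite Y" and cXY: "card X = Suc (card Y)" and Yne: "Y \<noteq> {}"
  shows "map_pmf (\<lambda>(x, y). card ((Y - {y}) - (X - {x})) + 1) (pair_pmf (pmf_of_set X) (pmf_of_set Y))
       = red_step (card X) (card (Y - X) + 1)"
proof -
  define g where "g = (\<lambda>(x, y). card ((Y - {y}) - (X - {x})) + 1)"
  define d where "d = card (Y - X)"
  define m where "m = card (X \<inter> Y)"
  note levels = gap_after_removal_level_sets[where X = X and Y = Y, OF fY, folded g_def d_def]
  have Xne: "X \<noteq> {}" using cXY by auto
  have cY: "card Y = m + d" unfolding m_def d_def using fY
    by (metis Int_commute card_Diff_subset_Int card_mono finite_Int inf_le2 le_add_diff_inverse finite_Diff)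
  have cX_Y: "card (X - Y) = d + 1" using cXY cY fX fY unfolding m_def by (simp add: card_Diff_subset_Int)
  have prob: "pmf (map_pmf g (pmf_of_set (X \<times> Y))) i = card {z \<in> X \<times> Y. g z = i} / card (X \<times> Y)" for i
    using fX fY Xne Yne by (simp add: pmf_map_pmf_of_set)
  have "map_pmf g (pmf_of_set (X \<times> Y)) = red_step (card X) (d + 1)"
  proof (rule red_step_unique[symmetric])
    show "2 \<le> card X" using cXY Yne fY by (simp add: Suc_le_eq card_gt_0_iff)
    show "d + 1 \<le> card X" using cXY cY by simp
    fix i assume i: "i \<noteq> d + 1"
    consider "i = d + 2" | "i = d" | "i \<notin> {d, d + 1, d + 2}" using i by auto
    then show "pmf (map_pmf g (pmf_of_set (X \<times> Y))) i = red_step_prob (card X) (d + 1) i"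
    proof cases
      case 1
      then show ?thesis using prob[of i] levels(1) card_offdiagonal[of "X \<inter> Y"] fX cXY cY
        by (simp add: m_def red_step_prob_def card_cartesian_product algebra_simps diff_mult_distrib2)
    next
      case 2
      then show ?thesis using prob[of i] levels(2) cXY cY cX_Y
        by (simp add: red_step_prob_def card_cartesian_product d_def algebra_simps)
    next
      case 3
      then have "{z \<in> X \<times> Y. g z = i} = {}" by (rule levels(3))
      then show ?thesis using 3 prob[of i] by (simp only: card.empty) (simp add: red_step_prob_def)
    qed
  qed
  then show ?thesis using pair_pmf_of_set[OF fX fY Xne Yne] unfolding g_def d_def by simp
qed

fun gap_counts :: "'a list \<Rightarrow> 'a list \<Rightarrow> nat list" where
  "gap_counts (x # xs) (y # ys) = (card (set ys - set xs) + 1) # gap_counts xs ys"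
| "gap_counts _ _ = []"

lemma length_gap_counts [simp]: "length (gap_counts xs ys) = min (length xs) (length ys)"
  by (induct xs ys rule: gap_counts.induct) auto

lemma nth_gap_counts:
  "j < length ys \<Longrightarrow> length ys < length xs \<Longrightarrow>
   gap_counts xs ys ! j = card (set (drop (Suc j) ys) - set (drop (Suc j) xs)) + 1"
  by (induct xs ys arbitrary: j rule: gap_counts.induct) (auto simp: nth_Cons split: nat.split)

lemma pair_random_arrangements_first:
  assumes "finite X" "finite Y" "X \<noteq> {}" "Y \<noteq> {}"
  shows "pair_pmf (random_arrangement X) (random_arrangement Y)
       = bind_pmf (pair_pmf (pmf_of_set X) (pmf_of_set Y)) (\<lambda>(x, y).
           map_pmf (\<lambda>(xs, ys). (x # xs, y # ys))
             (pair_pmf (random_arrangement (X - {x})) (random_arrangement (Y - {y}))))"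
proof -
  have "pair_pmf (random_arrangement X) (random_arrangement Y)
      = bind_pmf (pmf_of_set X) (\<lambda>x. bind_pmf (random_arrangement (X - {x})) (\<lambda>xs.
          bind_pmf (pmf_of_set Y) (\<lambda>y. bind_pmf (random_arrangement (Y - {y})) (\<lambda>ys.
            return_pmf (x # xs, y # ys)))))"
    using assms by (simp add: random_permutation_of_set pair_pmf_def bind_assoc_pmf bind_return_pmf)
  also have "\<dots> = bind_pmf (pmf_of_set X) (\<lambda>x. bind_pmf (pmf_of_set Y) (\<lambda>y.
          bind_pmf (random_arrangement (X - {x})) (\<lambda>xs. bind_pmf (random_arrangement (Y - {y})) (\<lambda>ys.
            return_pmf (x # xs, y # ys)))))"
    by (rule bind_pmf_cong[OF refl], rule bind_commute_pmf)
  also have "\<dots> = bind_pmf (pair_pmf (pmf_of_set X) (pmf_of_set Y)) (\<lambda>(x, y).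
           map_pmf (\<lambda>(xs, ys). (x # xs, y # ys))
             (pair_pmf (random_arrangement (X - {x})) (random_arrangement (Y - {y}))))"
    by (simp add: pair_pmf_def map_bind_pmf bind_assoc_pmf bind_return_pmf)
  finally show ?thesis .
qed

lemma gap_counts_Cons_random:
  assumes "finite X" "finite Y"
  shows "map_pmf (\<lambda>(xs, ys). gap_counts (x # xs) (y # ys)) (pair_pmf (random_arrangement X) (random_arrangement Y))
       = map_pmf (Cons (card (Y - X) + 1))
           (map_pmf (\<lambda>(xs, ys). gap_counts xs ys) (pair_pmf (random_arrangement X) (random_arrangement Y)))"
  unfolding pmf.map_comp
proof (rule map_pmf_cong[OF refl], clarify)
  fix xs ys assume "(xs, ys) \<in> set_pmf (pair_pmf (random_arrangement X) (random_arrangement Y))"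
  then have "set xs = X" "set ys = Y"
    using assms by (auto simp: set_random_arrangement dest: permutations_of_setD)
  then show "gap_counts (x # xs) (y # ys) = (Cons (card (Y - X) + 1) \<circ> (\<lambda>(xs, ys). gap_counts xs ys)) (xs, ys)"
    by simp
qed

lemma gap_counts_red_chain:
  fixes X Y :: "'a set"
  assumes "finite X" "finite Y" "card X = Suc (card Y)"
  shows "map_pmf (\<lambda>(xs, ys). gap_counts xs ys) (pair_pmf (random_arrangement X) (random_arrangement Y))
       = red_chain (card X) (card (Y - X) + 1)"
  using assms
proof (induct "card Y" arbitrary: X Y)
  case 0
  then show ?case by (simp add: pmf_of_set_singleton pair_return_pmf2 pmf.map_comp o_def)
next
  case (Suc k)
  define gap' where "gap' = (\<lambda>(x, y). card ((Y - {y}) - (X - {x})) + 1)"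
  define continue where "continue = (\<lambda>r. map_pmf (Cons r) (red_chain (Suc k) r))"
  have ne: "X \<noteq> {}" "Y \<noteq> {}" using Suc.hyps(2) Suc.prems by auto
  have "map_pmf (\<lambda>(xs, ys). gap_counts xs ys) (pair_pmf (random_arrangement X) (random_arrangement Y))
      = bind_pmf (pair_pmf (pmf_of_set X) (pmf_of_set Y)) (\<lambda>(x, y).
          map_pmf (\<lambda>(xs, ys). gap_counts (x # xs) (y # ys))
            (pair_pmf (random_arrangement (X - {x})) (random_arrangement (Y - {y}))))"
    using Suc.prems ne by (simp add: pair_random_arrangements_first map_bind_pmf pmf.map_comp
        case_prod_unfold o_def)
  also have "\<dots> = bind_pmf (pair_pmf (pmf_of_set X) (pmf_of_set Y)) (\<lambda>z. continue (gap' z))"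
  proof (rule bind_pmf_cong[OF refl], clarify)
    fix x y assume "(x, y) \<in> set_pmf (pair_pmf (pmf_of_set X) (pmf_of_set Y))"
    then have xy: "x \<in> X" "y \<in> Y" using Suc.prems ne by auto
    have fin: "finite (X - {x})" "finite (Y - {y})" using Suc.prems by auto
    show "map_pmf (\<lambda>(xs, ys). gap_counts (x # xs) (y # ys))
            (pair_pmf (random_arrangement (X - {x})) (random_arrangement (Y - {y})))
        = continue (gap' (x, y))"
      using gap_counts_Cons_random[OF fin] Suc.hyps(1)[of "Y - {y}" "X - {x}"] Suc.hyps(2) Suc.prems xy fin
      by (simp add: gap'_def continue_def)
  qed
  also have "\<dots> = bind_pmf (map_pmf gap' (pair_pmf (pmf_of_set X) (pmf_of_set Y))) continue"
    by (simp add: bind_map_pmf)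
  also have "map_pmf gap' (pair_pmf (pmf_of_set X) (pmf_of_set Y)) = red_step (card X) (card (Y - X) + 1)"
    unfolding gap'_def using gap_step_red_step Suc.prems ne by blast
  finally show ?case using Suc.prems by (simp add: continue_def flip: Suc.hyps(2))
qed

text \<open>The case needed for the theorem: X = Y, where the second arrangement
  loses its first entry, after which the gap is empty.\<close>
lemma gap_counts_tail_red_chain:
  assumes "finite X" "X \<noteq> {}"
  shows "map_pmf (\<lambda>(xs, ys). gap_counts xs (tl ys)) (pair_pmf (random_arrangement X) (random_arrangement X))
       = red_chain (card X) 1"
proof -
  have "random_arrangement X = bind_pmf (pmf_of_set X) (\<lambda>q. map_pmf (Cons q) (random_arrangement (X - {q})))"
    using assms by (simp add: random_permutation_of_set map_pmf_def)
  then have "map_pmf (\<lambda>(xs, ys). gap_counts xs (tl ys)) (pair_pmf (random_arrangement X) (random_arrangement X))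
      = bind_pmf (pmf_of_set X) (\<lambda>q. map_pmf (\<lambda>(xs, ys). gap_counts xs ys)
          (pair_pmf (random_arrangement X) (random_arrangement (X - {q}))))"
    by (simp add: pair_pmf_bind_right pair_map_pmf2 map_bind_pmf pmf.map_comp o_def case_prod_unfold)
  also have "\<dots> = bind_pmf (pmf_of_set X) (\<lambda>q. red_chain (card X) 1)"
  proof (rule bind_pmf_cong[OF refl])
    fix q assume "q \<in> set_pmf (pmf_of_set X)"
    then have "q \<in> X" using assms by simp
    then have "card X = Suc (card (X - {q}))" using assms(1) by (metis card_Suc_Diff1)
    moreover have no_gap: "X - {q} - X = {}" by blast
    ultimately show "map_pmf (\<lambda>(xs, ys). gap_counts xs ys)
          (pair_pmf (random_arrangement X) (random_arrangement (X - {q}))) = red_chain (card X) 1"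
      using gap_counts_red_chain[of X "X - {q}", unfolded no_gap] assms by simp
  qed
  finally show ?thesis by simp
qed

section \<open>From permutations to arrangements\<close>

text \<open>A permutation \<rho> of the entries of a list is encoded by the list of the
  preimages of those entries; for the list [1..<n] this is
  [\<rho>\<inverse>(1), ..., \<rho>\<inverse>(n-1)].\<close>
definition inv_listing :: "'a list \<Rightarrow> ('a \<Rightarrow> 'a) \<Rightarrow> 'a list" where
  "inv_listing as \<rho> = map (inv \<rho>) as"

text \<open>The encoding is a bijection onto the arrangements; surjectivity
  follows by counting, as both sides have (card (set as))! elements.\<close>
lemma inv_listing_bij:
  assumes "distinct as"
  shows "bij_betw (inv_listing as) {\<rho>. \<rho> permutes set as} (permutations_of_set (set as))"
proof -
  let ?A = "set as"
  have inj: "inj_on (inv_listing as) {\<rho>. \<rho> permutes ?A}"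
  proof (rule inj_onI)
    fix \<rho> \<sigma> assume \<rho>: "\<rho> \<in> {\<rho>. \<rho> permutes ?A}" and \<sigma>: "\<sigma> \<in> {\<rho>. \<rho> permutes ?A}"
      and eq: "inv_listing as \<rho> = inv_listing as \<sigma>"
    have "inv \<rho> a = inv \<sigma> a" for a
    proof (cases "a \<in> ?A")
      case True then show ?thesis using eq by (simp add: inv_listing_def)
    next
      case False
      have "inv \<rho> permutes ?A" "inv \<sigma> permutes ?A" using \<rho> \<sigma> permutes_inv by auto
      then show ?thesis using False by (simp add: permutes_not_in)
    qed
    then show "\<rho> = \<sigma>" using \<rho> \<sigma> by (metis ext mem_Collect_eq permutes_inv_inv)
  qed
  have into: "inv_listing as ` {\<rho>. \<rho> permutes ?A} \<subseteq> permutations_of_set ?A"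
  proof clarify
    fix \<rho> assume "\<rho> permutes ?A"
    then have \<rho>': "inv \<rho> permutes ?A" by (rule permutes_inv)
    show "inv_listing as \<rho> \<in> permutations_of_set ?A"
      unfolding inv_listing_def using permutes_image[OF \<rho>'] permutes_inj_on[OF \<rho>'] assms
      by (intro permutations_of_setI) (auto simp: distinct_map)
  qed
  have "card (inv_listing as ` {\<rho>. \<rho> permutes ?A}) = card (permutations_of_set ?A)"
    using card_image[OF inj] card_permutations[of ?A "card ?A"] by simp
  then have "inv_listing as ` {\<rho>. \<rho> permutes ?A} = permutations_of_set ?A"
    using into by (simp add: card_subset_eq)
  then show ?thesis using inj by (simp add: bij_betw_def)
qed

lemma unif_perm_inv_listing:
  "map_pmf (inv_listing [1..<n]) (unif_perm n) = random_arrangement {1..n - 1}"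
proof -
  have set_upt: "set [1..<n] = {1..n - 1}" by auto
  have "{f. f permutes {1..n - 1}} \<noteq> {}" using permutes_id by blast
  then show ?thesis
    using map_pmf_of_set_bij_betw[OF inv_listing_bij[of "[1..<n]", unfolded set_upt]]
    by (simp add: unif_perm_def finite_permutations)
qed

lemma set_drop_inv_listing:
  assumes "bij \<rho>"
  shows "set (drop j (inv_listing [1..<n] \<rho>)) = \<rho> -` {Suc j..<n}"
  by (simp add: inv_listing_def drop_map bij_vimage_eq_inv_image[OF assms])

lemma crossing_set_eq:
  assumes \<rho>: "\<rho> permutes {1..n - 1}" and \<sigma>: "\<sigma> permutes {1..n - 1}"
  shows "{m \<in> {1..n - 1}. \<rho> m < k \<and> k < \<sigma> m} = \<sigma> -` {Suc k..<n} - \<rho> -` {k..<n}"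
proof (intro equalityI subsetI)
  fix m assume m: "m \<in> \<sigma> -` {Suc k..<n} - \<rho> -` {k..<n}"
  then have "\<sigma> m \<in> {1..n - 1}" by auto
  then have mI: "m \<in> {1..n - 1}" using permutes_in_image[OF \<sigma>] by blast
  then have "\<rho> m \<in> {1..n - 1}" using permutes_in_image[OF \<rho>] by blast
  then show "m \<in> {m \<in> {1..n - 1}. \<rho> m < k \<and> k < \<sigma> m}" using m mI by auto
next
  fix m assume m: "m \<in> {m \<in> {1..n - 1}. \<rho> m < k \<and> k < \<sigma> m}"
  then have "\<sigma> m \<in> {1..n - 1}" using permutes_in_image[OF \<sigma>] by blast
  then show "m \<in> \<sigma> -` {Suc k..<n} - \<rho> -` {k..<n}" using m by auto
qed

text \<open>The statistic of the theorem in terms of the encodings P, Q of \<rho>, \<sigma>: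
  at time k it is the gap between the suffix of Q after k entries and the
  suffix of P after k - 1 entries; at time 1 this gap is empty.\<close>
lemma crossing_counts_gap_counts:
  assumes n: "2 \<le> n" and \<rho>: "\<rho> permutes {1..n - 1}" and \<sigma>: "\<sigma> permutes {1..n - 1}"
  shows "map (\<lambda>k. card {m \<in> {1..n - 1}. \<rho> m < k \<and> k < \<sigma> m} + 1) [1..<n]
       = 1 # gap_counts (inv_listing [1..<n] \<rho>) (tl (inv_listing [1..<n] \<sigma>))"
proof (rule nth_equalityI)
  show "length (map (\<lambda>k. card {m \<in> {1..n - 1}. \<rho> m < k \<and> k < \<sigma> m} + 1) [1..<n])
      = length (1 # gap_counts (inv_listing [1..<n] \<rho>) (tl (inv_listing [1..<n] \<sigma>)))"
    using n by (simp add: inv_listing_def)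
next
  fix i assume "i < length (map (\<lambda>k. card {m \<in> {1..n - 1}. \<rho> m < k \<and> k < \<sigma> m} + 1) [1..<n])"
  then have i: "i < n - 1" by simp
  have bij: "bij \<rho>" "bij \<sigma>" using \<rho> \<sigma> permutes_bij by blast+
  show "map (\<lambda>k. card {m \<in> {1..n - 1}. \<rho> m < k \<and> k < \<sigma> m} + 1) [1..<n] ! i
      = (1 # gap_counts (inv_listing [1..<n] \<rho>) (tl (inv_listing [1..<n] \<sigma>))) ! i"
  proof (cases i)
    case 0
    have "1 \<le> \<rho> m" if "m \<in> {1..n - 1}" for m using that permutes_in_image[OF \<rho>] by auto
    then have "{m \<in> {1..n - 1}. \<rho> m < 1 \<and> 1 < \<sigma> m} = {}" by fastforce
    then show ?thesis using 0 n by simp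
  next
    case (Suc j)
    have "gap_counts (inv_listing [1..<n] \<rho>) (tl (inv_listing [1..<n] \<sigma>)) ! j
        = card (set (drop (Suc (Suc j)) (inv_listing [1..<n] \<sigma>))
                - set (drop (Suc j) (inv_listing [1..<n] \<rho>))) + 1"
      using i Suc by (simp add: nth_gap_counts inv_listing_def drop_Suc)
    also have "\<dots> = card {m \<in> {1..n - 1}. \<rho> m < Suc (Suc j) \<and> Suc (Suc j) < \<sigma> m} + 1"
      by (simp only: set_drop_inv_listing[OF bij(1)] set_drop_inv_listing[OF bij(2)] crossing_set_eq[OF \<rho> \<sigma>])
    finally show ?thesis using i Suc by simp
  qed
qed

lemma perm_process_arrangements:
  assumes "2 \<le> n"
  shows "perm_process n = map_pmf (\<lambda>(P, Q). 1 # gap_counts P (tl Q))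
           (pair_pmf (random_arrangement {1..n - 1}) (random_arrangement {1..n - 1}))"
proof -
  let ?encode = "\<lambda>(\<rho>, \<sigma>). (inv_listing [1..<n] \<rho>, inv_listing [1..<n] \<sigma>)"
  have "perm_process n
      = map_pmf ((\<lambda>(P, Q). 1 # gap_counts P (tl Q)) \<circ> ?encode) (pair_pmf (unif_perm n) (unif_perm n))"
    unfolding perm_process_def
  proof (rule map_pmf_cong[OF refl], clarify)
    fix \<rho> \<sigma> assume "(\<rho>, \<sigma>) \<in> set_pmf (pair_pmf (unif_perm n) (unif_perm n))"
    moreover have "set_pmf (unif_perm n) = {f. f permutes {1..n - 1}}"
      unfolding unif_perm_def using permutes_id[of "{1..n - 1}"]
      by (intro set_pmf_of_set) (blast, simp add: finite_permutations)
    ultimately have "\<rho> permutes {1..n - 1}" "\<sigma> permutes {1..n - 1}" by auto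
    then show "map (\<lambda>k. card {m \<in> {1..n - 1}. \<rho> m < k \<and> k < \<sigma> m} + 1) [1..<n]
        = ((\<lambda>(P, Q). 1 # gap_counts P (tl Q)) \<circ> ?encode) (\<rho>, \<sigma>)"
      using crossing_counts_gap_counts assms by simp
  qed
  then show ?thesis by (simp only: pmf.map_comp[symmetric] map_pair unif_perm_inv_listing)
qed

text \<open>Both processes equal red_chain n 0.\<close>
theorem corollary8:
  fixes n :: nat
  assumes "n \<ge> 2"
  shows "U_process n = perm_process n"
proof -
  let ?arrangements = "pair_pmf (random_arrangement {1..n - 1}) (random_arrangement {1..n - 1})"
  have "perm_process n = map_pmf (\<lambda>(P, Q). 1 # gap_counts P (tl Q)) ?arrangements"
    using perm_process_arrangements assms by simp
  also have "\<dots> = map_pmf (Cons 1) (map_pmf (\<lambda>(P, Q). gap_counts P (tl Q)) ?arrangements)"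
    by (simp add: pmf.map_comp case_prod_unfold o_def)
  also have "\<dots> = map_pmf (Cons 1) (red_chain (n - 1) 1)"
    using gap_counts_tail_red_chain[of "{1..n - 1}"] assms by simp
  also have "\<dots> = red_chain n 0" using red_chain_from_zero assms by simp
  also have "\<dots> = U_process n" using U_process_red_chain assms by simp
  finally show ?thesis ..
qed

end
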